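(* Let $U>0$, $\mu\in\mathbb{R}$, $T\ge0$ and let $(\gamma,\alpha,\rho_0)$ be a minimizer of $\mathcal{F}$ over $\mathcal{D}$. Then $\alpha\equiv0$ if and only if $\rho_0=0$. If $\rho_0>0$, then $\alpha<0$ almost everywhere and $\|\alpha\|_{L^1(\mathbb{T}^3)}<\rho_0$.
   Context: Let $\mathbb{T}^3=[-\pi,\pi]^3$ with periodic identification and normalized Haar measure $dp$. Let $\varepsilon(p)=4\sum_{k=1}^3\sin^2(p_k/2)$. $\mathcal{D}=\{(\gamma,\alpha,\rho_0): \gamma\in L^1(\mathbb{T}^3),\ \gamma\ge0,\ \alpha^2\le\gamma(1+\gamma)\text{ a.e.},\ \rho_0\ge0\}$. With $\beta=\sqrt{(\tfrac12+\gamma)^2-\alpha^2}$, $S(\gamma,\alpha)=\int\big[(\beta+\tfrac12)\ln(\beta+\tfrac12)-(\beta-\tfrac12)\ln(\beta-\tfrac12)\big]dp$, and $\mathcal{F}(\gamma,\alpha,\rho_0)=\int(\varepsilon-\mu)\gamma\,dp-\mu\rho_0-TS(\gamma,\alpha)+\frac U2(\int\alpha)^2+U(\int\gamma)^2+U\rho_0\int\alpha+2U\rho_0\int\gamma+\frac U2\rho_0^2$ (integrals over $\mathbb{T}^3$; entropy term absent at $T=0$). A minimizer is a point of $\mathcal{D}$ attaining $\inf_{\mathcal{D}}\mathcal{F}$. *)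

theory Defs
  imports "HOL-Analysis.Analysis"
begin

text \<open>The torus [-pi,pi]^3 (periodic identification is immaterial for
integrals, the boundary is a null set), with normalized Haar measure =
normalized Lebesgue measure on the fundamental cube.\<close>

definition T3box :: "(real^3) set" where
  "T3box = cbox (\<chi> i. - pi) (\<chi> i. pi)"

definition torus :: "(real^3) measure" where
  "torus = uniform_measure lborel T3box"

definition tint :: "(real^3 \<Rightarrow> real) \<Rightarrow> real" where
  "tint f = (\<integral>p. f p \<partial>torus)"

definition disp :: "real^3 \<Rightarrow> real" where
  "disp p = 4 * (\<Sum>k\<in>UNIV. (sin (p $ k / 2))^2)"

definition betaf :: "real \<Rightarrow> real \<Rightarrow> real" where
  "betaf g a = sqrt ((1/2 + g)^2 - a^2)"

definition entropy_density :: "real \<Rightarrow> real" where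
  "entropy_density b = (b + 1/2) * ln (b + 1/2) - (b - 1/2) * ln (b - 1/2)"

definition entropy :: "(real^3 \<Rightarrow> real) \<Rightarrow> (real^3 \<Rightarrow> real) \<Rightarrow> real" where
  "entropy \<gamma> \<alpha> = tint (\<lambda>p. entropy_density (betaf (\<gamma> p) (\<alpha> p)))"

definition admissible :: "(real^3 \<Rightarrow> real) \<Rightarrow> (real^3 \<Rightarrow> real) \<Rightarrow> real \<Rightarrow> bool" where
  "admissible \<gamma> \<alpha> \<rho>0 \<longleftrightarrow>
     integrable torus \<gamma> \<and> \<alpha> \<in> borel_measurable torus \<and>
     (AE p in torus. \<gamma> p \<ge> 0) \<and>
     (AE p in torus. (\<alpha> p)^2 \<le> \<gamma> p * (1 + \<gamma> p)) \<and> \<rho>0 \<ge> 0"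

definition Ffun :: "real \<Rightarrow> real \<Rightarrow> real \<Rightarrow> (real^3 \<Rightarrow> real) \<Rightarrow> (real^3 \<Rightarrow> real) \<Rightarrow> real \<Rightarrow> real" where
  "Ffun U \<mu> T \<gamma> \<alpha> \<rho>0 =
     tint (\<lambda>p. (disp p - \<mu>) * \<gamma> p) - \<mu> * \<rho>0 - T * entropy \<gamma> \<alpha>
     + U / 2 * (tint \<alpha>)^2 + U * (tint \<gamma>)^2 + U * \<rho>0 * tint \<alpha>
     + 2 * U * \<rho>0 * tint \<gamma> + U / 2 * \<rho>0^2"

definition is_minimizer :: "real \<Rightarrow> real \<Rightarrow> real \<Rightarrow> (real^3 \<Rightarrow> real) \<Rightarrow> (real^3 \<Rightarrow> real) \<Rightarrow> real \<Rightarrow> bool" where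
  "is_minimizer U \<mu> T \<gamma> \<alpha> \<rho>0 \<longleftrightarrow>
     admissible \<gamma> \<alpha> \<rho>0 \<and>
     (\<forall>\<gamma>' \<alpha>' \<rho>'. admissible \<gamma>' \<alpha>' \<rho>' \<longrightarrow> Ffun U \<mu> T \<gamma> \<alpha> \<rho>0 \<le> Ffun U \<mu> T \<gamma>' \<alpha>' \<rho>')"

end

theory Submission
  imports Defs "HOL-Probability.Probability_Measure"
begin

text \<open>
  The entropy density increases with beta = sqrt ((1/2 + gamma)^2 - alpha^2). So at T >= 0 a
  minimizer has no larger zero-temperature energy than any admissible competitor with pointwise
  larger beta, and in that energy alpha enters only through U/2 (int alpha + rho0)^2.
  Replacing alpha by -t |alpha| for 0 <= t <= 1 gives
  (int alpha + rho0)^2 <= (rho0 - t ||alpha||_1)^2, hence either int alpha + rho0 = 0, or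
  alpha <= 0 a.e. and ||alpha||_1 < rho0.
  In the first case, unless alpha = 0 a.e., moving the mass alpha^2 / (1 + 2 gamma) from gamma
  into the condensate while shrinking alpha strictly lowers the energy.
  In the second case, adding e^2 to gamma and -e to alpha on the set where alpha = 0 lowers the
  energy at first order in e, so that set is null.
\<close>

lemma sets_torus [simp, measurable_cong]: "sets torus = sets borel"
  by (simp add: torus_def)

lemma space_torus [simp]: "space torus = UNIV"
  by (simp add: torus_def)

lemma prob_space_torus: "prob_space torus"
proof -
  have "0 < (\<Prod>b\<in>Basis. ((\<chi> i. pi) - (\<chi> i. - pi)) \<bullet> (b :: real^3))"
    by (intro prod_pos) (auto simp: Basis_vec_def inner_axis)
  then have "emeasure lborel T3box \<noteq> 0"
    unfolding T3box_def by (subst emeasure_lborel_cbox) (auto simp: Basis_vec_def inner_axis)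
  then show ?thesis
    unfolding torus_def T3box_def
    using emeasure_lborel_cbox_finite by (intro prob_space_uniform_measure) (auto simp: less_top)
qed

interpretation torus: prob_space torus
  by (rule prob_space_torus)

lemma tint_cmult [simp]: "tint (\<lambda>p. c * f p) = c * tint f"
  by (simp add: tint_def)

lemma tint_nonneg: "AE p in torus. 0 \<le> f p \<Longrightarrow> 0 \<le> tint f"
  unfolding tint_def by (rule integral_nonneg_AE)

definition bose_entropy :: "real \<Rightarrow> real" where
  "bose_entropy x = (x + 1) * ln (x + 1) - x * ln x"

lemma entropy_density_eq_bose_entropy: "entropy_density b = bose_entropy (b - 1/2)"
  unfolding entropy_density_def bose_entropy_def by (simp add: algebra_simps)

lemma bose_entropy_eq: "0 < x \<Longrightarrow> bose_entropy x = ln (x + 1) + x * ln ((x + 1) / x)"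
  unfolding bose_entropy_def by (simp add: ln_div algebra_simps)

lemma bose_entropy_0 [simp]: "bose_entropy 0 = 0"
  by (simp add: bose_entropy_def)

lemma bose_entropy_nonneg:
  assumes "0 \<le> x" shows "0 \<le> bose_entropy x"
proof (cases "x = 0")
  case False
  with assms have "0 < x" by simp
  then show ?thesis by (simp add: bose_entropy_eq)
qed simp

lemma bose_entropy_le:
  assumes "0 \<le> x" shows "bose_entropy x \<le> x + 1"
proof (cases "x = 0")
  case False
  with assms have x: "0 < x" by simp
  have "ln (x + 1) \<le> x"
    using ln_le_minus_one[of "x + 1"] x by simp
  moreover have "x * ln ((x + 1) / x) \<le> x * ((x + 1) / x - 1)"
    using x by (intro mult_left_mono ln_le_minus_one) auto
  ultimately show ?thesis
    using x by (simp add: bose_entropy_eq field_simps)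
qed simp

lemma bose_entropy_has_real_derivative:
  assumes "0 < x" shows "(bose_entropy has_real_derivative ln (x + 1) - ln x) (at x)"
proof -
  have "((\<lambda>x. (x + 1) * ln (x + 1) - x * ln x) has_real_derivative
          (ln (x + 1) + 1) - (ln x + 1)) (at x)"
    using assms by (auto intro!: derivative_eq_intros)
  then show ?thesis
    unfolding bose_entropy_def[abs_def] by simp
qed

lemma bose_entropy_mono:
  assumes "0 \<le> x" "x \<le> y" shows "bose_entropy x \<le> bose_entropy y"
proof (cases "x = 0")
  case True
  then show ?thesis using assms bose_entropy_nonneg by simp
next
  case False
  with assms have x: "0 < x" by simp
  show ?thesis
  proof (rule DERIV_nonneg_imp_increasing_open[OF assms(2)])
    show "\<exists>d. (bose_entropy has_real_derivative d) (at z) \<and> 0 \<le> d"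
      if "x < z" "z < y" for z
      using that x bose_entropy_has_real_derivative[of z] by auto
    show "continuous_on {x..y} bose_entropy"
      using x by (intro continuous_at_imp_continuous_on ballI
          DERIV_isCont[OF bose_entropy_has_real_derivative]) auto
  qed
qed

lemma entropy_density_mono:
  "1/2 \<le> b \<Longrightarrow> b \<le> b' \<Longrightarrow> entropy_density b \<le> entropy_density b'"
  unfolding entropy_density_eq_bose_entropy by (rule bose_entropy_mono) auto

lemma betaf_ge_half: "a\<^sup>2 \<le> g * (1 + g) \<Longrightarrow> 1/2 \<le> betaf g a"
  unfolding betaf_def
  by (rule real_le_rsqrt) (simp add: power2_eq_square algebra_simps)

lemma betaf_le: "0 \<le> g \<Longrightarrow> betaf g a \<le> 1/2 + g"
  unfolding betaf_def using real_sqrt_le_mono[of "(1/2 + g)\<^sup>2 - a\<^sup>2" "(1/2 + g)\<^sup>2"] by simp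

lemma disp_bounds: "0 \<le> disp p" "disp p \<le> 12"
proof -
  have "(\<Sum>k\<in>UNIV. (sin (p $ k / 2))\<^sup>2) \<le> (\<Sum>k\<in>(UNIV :: 3 set). 1)"
    by (intro sum_mono) (simp add: abs_square_le_1)
  then show "disp p \<le> 12"
    unfolding disp_def by simp
  show "0 \<le> disp p"
    unfolding disp_def by (simp add: sum_nonneg)
qed

lemma borel_measurable_disp [measurable]: "disp \<in> borel_measurable borel"
  unfolding disp_def by measurable

lemma integrable_disp_mult:
  assumes "integrable torus f" shows "integrable torus (\<lambda>p. disp p * f p)"
proof (rule Bochner_Integration.integrable_bound)
  show "integrable torus (\<lambda>p. 12 * f p)"
    using assms by simp
  show "AE p in torus. norm (disp p * f p) \<le> norm (12 * f p)"
    using disp_bounds by (auto simp: abs_mult intro!: mult_right_mono)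
qed (use borel_measurable_integrable[OF assms] in simp)

lemma tint_disp_mult_le:
  assumes "integrable torus f" "AE p in torus. 0 \<le> f p"
  shows "tint (\<lambda>p. disp p * f p) \<le> 12 * tint f"
proof -
  have "tint (\<lambda>p. disp p * f p) \<le> tint (\<lambda>p. 12 * f p)"
    unfolding tint_def using assms(2)
  proof (intro integral_mono_AE)
    show "integrable torus (\<lambda>p. disp p * f p)" "integrable torus (\<lambda>p. 12 * f p)"
      using assms(1) integrable_disp_mult[OF assms(1)] by simp_all
  qed (auto intro: mult_right_mono disp_bounds)
  then show ?thesis
    by simp
qed

lemma admissibleD:
  assumes "admissible \<gamma> \<alpha> \<rho>"
  shows "integrable torus \<gamma>" "\<alpha> \<in> borel_measurable torus" "AE p in torus. 0 \<le> \<gamma> p"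
    "AE p in torus. (\<alpha> p)\<^sup>2 \<le> \<gamma> p * (1 + \<gamma> p)" "0 \<le> \<rho>"
  using assms unfolding admissible_def by auto

lemma abs_le_add_half_if_sq_le:
  fixes a g :: real
  assumes "0 \<le> g" "a\<^sup>2 \<le> g * (1 + g)" shows "\<bar>a\<bar> \<le> g + 1/2"
proof (rule power2_le_imp_le)
  show "\<bar>a\<bar>\<^sup>2 \<le> (g + 1/2)\<^sup>2"
    using assms by (simp add: power2_eq_square algebra_simps)
qed (use assms in simp)

lemma integrable_alpha_if_admissible:
  assumes "admissible \<gamma> \<alpha> \<rho>" shows "integrable torus \<alpha>"
proof (rule Bochner_Integration.integrable_bound)
  note adm = admissibleD[OF assms]
  show "integrable torus (\<lambda>p. \<gamma> p + 1/2)"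
    using adm by simp
  show "AE p in torus. norm (\<alpha> p) \<le> norm (\<gamma> p + 1/2)"
    using adm(3,4) by eventually_elim (auto dest: abs_le_add_half_if_sq_le)
qed (use admissibleD(2)[OF assms] in simp)

lemma integrable_entropy_density_if_admissible:
  assumes "admissible \<gamma> \<alpha> \<rho>"
  shows "integrable torus (\<lambda>p. entropy_density (betaf (\<gamma> p) (\<alpha> p)))"
proof (rule Bochner_Integration.integrable_bound)
  note adm = admissibleD[OF assms]
  note [measurable] = borel_measurable_integrable[OF adm(1)] adm(2)
  show "integrable torus (\<lambda>p. \<gamma> p + 1)"
    using adm by simp
  show "(\<lambda>p. entropy_density (betaf (\<gamma> p) (\<alpha> p))) \<in> borel_measurable torus"
    unfolding entropy_density_def betaf_def by measurable
  show "AE p in torus. norm (entropy_density (betaf (\<gamma> p) (\<alpha> p))) \<le> norm (\<gamma> p + 1)"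
    using adm(3,4)
  proof eventually_elim
    case (elim p)
    have "1/2 \<le> betaf (\<gamma> p) (\<alpha> p)" "betaf (\<gamma> p) (\<alpha> p) \<le> 1/2 + \<gamma> p"
      using betaf_ge_half[OF elim(2)] betaf_le[OF elim(1)] by simp_all
    then show ?case
      using bose_entropy_nonneg[of "betaf (\<gamma> p) (\<alpha> p) - 1/2"]
        bose_entropy_le[of "betaf (\<gamma> p) (\<alpha> p) - 1/2"]
      by (simp add: entropy_density_eq_bose_entropy)
  qed
qed

lemma Ffun_eq_zero_temperature_minus_entropy:
  "Ffun U \<mu> T \<gamma> \<alpha> \<rho> = Ffun U \<mu> 0 \<gamma> \<alpha> \<rho> - T * entropy \<gamma> \<alpha>"
  unfolding Ffun_def by simp

lemma Ffun_zero_temperature: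
  assumes "integrable torus \<gamma>"
  shows "Ffun U \<mu> 0 \<gamma> \<alpha> \<rho> = tint (\<lambda>p. disp p * \<gamma> p) - \<mu> * (tint \<gamma> + \<rho>)
    + U/2 * (tint \<alpha> + \<rho>)\<^sup>2 + U * (tint \<gamma>)\<^sup>2 + 2 * U * \<rho> * tint \<gamma>"
proof -
  have "tint (\<lambda>p. (disp p - \<mu>) * \<gamma> p) = tint (\<lambda>p. disp p * \<gamma> p) - \<mu> * tint \<gamma>"
    using assms integrable_disp_mult[OF assms] by (simp add: tint_def left_diff_distrib)
  then show ?thesis
    unfolding Ffun_def by (simp add: power2_eq_square algebra_simps)
qed

lemma minimizer_admissible: "is_minimizer U \<mu> T \<gamma> \<alpha> \<rho> \<Longrightarrow> admissible \<gamma> \<alpha> \<rho>"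
  unfolding is_minimizer_def by simp

lemma minimizer_le_competitor:
  assumes min: "is_minimizer U \<mu> T \<gamma> \<alpha> \<rho>" and "0 \<le> T"
    and "integrable torus \<gamma>'" "\<alpha>' \<in> borel_measurable torus" "AE p in torus. 0 \<le> \<gamma>' p" "0 \<le> \<rho>'"
    and discr_le: "AE p in torus. (1/2 + \<gamma> p)\<^sup>2 - (\<alpha> p)\<^sup>2 \<le> (1/2 + \<gamma>' p)\<^sup>2 - (\<alpha>' p)\<^sup>2"
  shows "Ffun U \<mu> 0 \<gamma> \<alpha> \<rho> \<le> Ffun U \<mu> 0 \<gamma>' \<alpha>' \<rho>'"
proof -
  have adm: "admissible \<gamma> \<alpha> \<rho>"
    using min by (rule minimizer_admissible)
  have "AE p in torus. (\<alpha>' p)\<^sup>2 \<le> \<gamma>' p * (1 + \<gamma>' p)"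
    using admissibleD(4)[OF adm] discr_le
    by eventually_elim (simp add: power2_eq_square algebra_simps)
  then have adm': "admissible \<gamma>' \<alpha>' \<rho>'"
    using assms unfolding admissible_def by simp
  have "entropy \<gamma> \<alpha> \<le> entropy \<gamma>' \<alpha>'"
    unfolding entropy_def tint_def
  proof (rule integral_mono_AE)
    show "integrable torus (\<lambda>p. entropy_density (betaf (\<gamma> p) (\<alpha> p)))"
      "integrable torus (\<lambda>p. entropy_density (betaf (\<gamma>' p) (\<alpha>' p)))"
      using adm adm' by (simp_all add: integrable_entropy_density_if_admissible)
    show "AE p in torus. entropy_density (betaf (\<gamma> p) (\<alpha> p)) \<le> entropy_density (betaf (\<gamma>' p) (\<alpha>' p))"
      using admissibleD(4)[OF adm] discr_le
      by eventually_elim (auto simp: betaf_def intro: entropy_density_mono betaf_ge_half[unfolded betaf_def])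
  qed
  moreover have "Ffun U \<mu> T \<gamma> \<alpha> \<rho> \<le> Ffun U \<mu> T \<gamma>' \<alpha>' \<rho>'"
    using min adm' unfolding is_minimizer_def by blast
  ultimately show ?thesis
    using \<open>0 \<le> T\<close> mult_left_mono
    unfolding Ffun_eq_zero_temperature_minus_entropy[of U \<mu> T] by fastforce
qed

lemma minimizer_condensate_sq_le:
  assumes min: "is_minimizer U \<mu> T \<gamma> \<alpha> \<rho>" and "0 \<le> T" "0 < U" and t: "0 \<le> t" "t \<le> 1"
  shows "(tint \<alpha> + \<rho>)\<^sup>2 \<le> (\<rho> - t * tint (\<lambda>p. \<bar>\<alpha> p\<bar>))\<^sup>2"
proof -
  note adm = admissibleD[OF minimizer_admissible[OF min]]
  have "(t * \<alpha> p)\<^sup>2 \<le> (\<alpha> p)\<^sup>2" for p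
    using t by (simp add: power_mult_distrib mult_left_le_one_le power_le_one)
  then have "Ffun U \<mu> 0 \<gamma> \<alpha> \<rho> \<le> Ffun U \<mu> 0 \<gamma> (\<lambda>p. - (t * \<bar>\<alpha> p\<bar>)) \<rho>"
    using adm by (intro minimizer_le_competitor[OF min \<open>0 \<le> T\<close>]) (simp_all add: power_mult_distrib)
  then show ?thesis
    using \<open>0 < U\<close> adm(1) by (simp add: Ffun_zero_temperature tint_def)
qed

lemma sq_add_le_sq_diff_cases:
  fixes a A \<rho> :: real
  assumes "0 \<le> A" "0 \<le> \<rho>" "- A \<le> a"
    and le: "\<And>t. 0 \<le> t \<Longrightarrow> t \<le> 1 \<Longrightarrow> (a + \<rho>)\<^sup>2 \<le> (\<rho> - t * A)\<^sup>2"
  shows "a + \<rho> = 0 \<or> (a = - A \<and> A < \<rho>)"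
proof (cases "A < \<rho>")
  case True
  have "(a + \<rho>)\<^sup>2 \<le> (\<rho> - A)\<^sup>2"
    using le[of 1] by simp
  then have "a + \<rho> \<le> \<rho> - A"
    by (rule power2_le_imp_le) (use True in simp)
  then show ?thesis
    using True \<open>- A \<le> a\<close> by simp
next
  case False
  define t where "t = (if A = 0 then 0 else \<rho> / A)"
  have "0 \<le> t" "t \<le> 1" "t * A = \<rho>"
    using False assms(1,2) by (auto simp: t_def)
  then show ?thesis
    using le[of t] by simp
qed

lemma AE_nonpos_if_integral_eq_neg_integral_abs:
  fixes f :: "'a \<Rightarrow> real"
  assumes "integrable M f" "integral\<^sup>L M f = - integral\<^sup>L M (\<lambda>x. \<bar>f x\<bar>)"
  shows "AE x in M. f x \<le> 0"
proof -
  have "integral\<^sup>L M (\<lambda>x. \<bar>f x\<bar> + f x) = 0"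
    using assms by simp
  then have "AE x in M. \<bar>f x\<bar> + f x = 0"
    using assms(1) by (subst integral_nonneg_eq_0_iff_AE[symmetric]) auto
  then show ?thesis
    by eventually_elim linarith
qed

lemma transfer_discriminant_le:
  fixes g a t :: real
  assumes "0 \<le> g" "0 \<le> t" "t \<le> 1"
  shows "(1/2 + g)\<^sup>2 - a\<^sup>2 \<le> (1/2 + (g - t * (a\<^sup>2 / (1 + 2 * g))))\<^sup>2 - ((1 - t) * a)\<^sup>2"
proof -
  define h where "h = a\<^sup>2 / (1 + 2 * g)"
  have "h * (1 + 2 * g) = a\<^sup>2"
    using assms(1) by (simp add: h_def)
  moreover have "(1/2 + (g - t * h))\<^sup>2 - ((1 - t) * a)\<^sup>2 - ((1/2 + g)\<^sup>2 - a\<^sup>2)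
      = t\<^sup>2 * h\<^sup>2 + t * (1 - t) * a\<^sup>2 + t * (a\<^sup>2 - h * (1 + 2 * g))"
    by (simp add: power2_eq_square algebra_simps)
  moreover have "0 \<le> t\<^sup>2 * h\<^sup>2 + t * (1 - t) * a\<^sup>2"
    using assms by simp
  ultimately show ?thesis
    unfolding h_def by simp
qed

definition transfer_density :: "(real^3 \<Rightarrow> real) \<Rightarrow> (real^3 \<Rightarrow> real) \<Rightarrow> real^3 \<Rightarrow> real" where
  "transfer_density \<gamma> \<alpha> p = (\<alpha> p)\<^sup>2 / (1 + 2 * \<gamma> p)"

lemma AE_transfer_density_bounds:
  assumes "admissible \<gamma> \<alpha> \<rho>"
  shows "AE p in torus. 0 \<le> transfer_density \<gamma> \<alpha> p \<and> transfer_density \<gamma> \<alpha> p \<le> \<gamma> p"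
  using admissibleD(3,4)[OF assms]
proof eventually_elim
  case (elim p)
  have "\<gamma> p * (1 + \<gamma> p) \<le> \<gamma> p * (1 + 2 * \<gamma> p)"
    using elim(1) by (intro mult_left_mono) auto
  then show ?case
    using elim by (simp add: transfer_density_def divide_le_eq)
qed

lemma integrable_transfer_density:
  assumes "admissible \<gamma> \<alpha> \<rho>"
  shows "integrable torus (transfer_density \<gamma> \<alpha>)"
proof (rule Bochner_Integration.integrable_bound[OF admissibleD(1)[OF assms]])
  note [measurable] = borel_measurable_integrable[OF admissibleD(1)[OF assms]] admissibleD(2)[OF assms]
  show "transfer_density \<gamma> \<alpha> \<in> borel_measurable torus"
    unfolding transfer_density_def[abs_def] by measurable
  show "AE p in torus. norm (transfer_density \<gamma> \<alpha> p) \<le> norm (\<gamma> p)"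
    using AE_transfer_density_bounds[OF assms] by eventually_elim simp
qed

lemma tint_transfer_density_pos:
  assumes "admissible \<gamma> \<alpha> \<rho>" "\<not> (AE p in torus. \<alpha> p = 0)"
  shows "0 < tint (transfer_density \<gamma> \<alpha>)"
proof -
  note bounds = AE_transfer_density_bounds[OF assms(1)]
  have "tint (transfer_density \<gamma> \<alpha>) \<noteq> 0"
  proof
    assume "tint (transfer_density \<gamma> \<alpha>) = 0"
    then have "AE p in torus. transfer_density \<gamma> \<alpha> p = 0"
      using integral_nonneg_eq_0_iff_AE[OF integrable_transfer_density[OF assms(1)]] bounds
      unfolding tint_def by auto
    then have "AE p in torus. \<alpha> p = 0"
      using admissibleD(3)[OF assms(1)] by eventually_elim (simp add: transfer_density_def)
    with assms(2) show False ..
  qed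
  moreover have "0 \<le> tint (transfer_density \<gamma> \<alpha>)"
    using bounds by (intro tint_nonneg) auto
  ultimately show ?thesis
    by simp
qed

lemma Ffun_zero_transfer:
  assumes "integrable torus \<gamma>" "integrable torus g"
    and "tint \<alpha> + \<rho> = 0" and t: "t * (tint g + \<rho>) = tint g"
  shows "Ffun U \<mu> 0 (\<lambda>p. \<gamma> p - t * g p) (\<lambda>p. (1 - t) * \<alpha> p) (\<rho> + t * tint g)
    = Ffun U \<mu> 0 \<gamma> \<alpha> \<rho> - t * tint (\<lambda>p. disp p * g p) - U * (tint g)\<^sup>2 * ((t - 1)\<^sup>2 + 1/2)"
proof -
  have tints: "tint (\<lambda>p. \<gamma> p - t * g p) = tint \<gamma> - t * tint g"
    "tint (\<lambda>p. disp p * (\<gamma> p - t * g p)) = tint (\<lambda>p. disp p * \<gamma> p) - t * tint (\<lambda>p. disp p * g p)"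
    using assms(1,2) integrable_disp_mult[OF assms(1)] integrable_disp_mult[OF assms(2)]
    by (simp_all add: tint_def right_diff_distrib mult.left_commute[of "disp _"])
  have int: "integrable torus (\<lambda>p. \<gamma> p - t * g p)"
    using assms(1,2) by simp
  have "tint \<alpha> = - \<rho>"
    using assms(3) by simp
  then have "Ffun U \<mu> 0 (\<lambda>p. \<gamma> p - t * g p) (\<lambda>p. (1 - t) * \<alpha> p) (\<rho> + t * tint g)
      = Ffun U \<mu> 0 \<gamma> \<alpha> \<rho> - t * tint (\<lambda>p. disp p * g p) + U/2 * (t * (tint g + \<rho>))\<^sup>2
        - U * t\<^sup>2 * (tint g)\<^sup>2 - 2 * U * tint g * (t * \<rho>)"
    unfolding Ffun_zero_temperature[OF assms(1)] Ffun_zero_temperature[OF int] tints tint_cmult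
    by (simp add: field_simps power2_eq_square)
  also have "t * \<rho> = tint g - t * tint g"
    using t by (simp add: algebra_simps)
  finally show ?thesis
    unfolding t by (simp add: field_simps power2_eq_square)
qed

lemma minimizer_AE_alpha_eq_0:
  assumes min: "is_minimizer U \<mu> T \<gamma> \<alpha> \<rho>" and "0 \<le> T" "0 < U"
    and balanced: "tint \<alpha> + \<rho> = 0"
  shows "AE p in torus. \<alpha> p = 0"
proof (rule ccontr)
  assume nonzero: "\<not> (AE p in torus. \<alpha> p = 0)"
  have adm: "admissible \<gamma> \<alpha> \<rho>"
    using min by (rule minimizer_admissible)
  note [measurable] = admissibleD(2)[OF adm]
  define g where "g = transfer_density \<gamma> \<alpha>"
  have g_bounds: "AE p in torus. 0 \<le> g p \<and> g p \<le> \<gamma> p"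
    unfolding g_def using adm by (rule AE_transfer_density_bounds)
  have g_int: "integrable torus g"
    unfolding g_def using adm by (rule integrable_transfer_density)
  define G where "G = tint g"
  have "0 < G"
    unfolding G_def g_def using adm nonzero by (rule tint_transfer_density_pos)
  \<comment> \<open>this choice of t makes the new value of tint alpha + rho equal to G\<close>
  define t where "t = G / (G + \<rho>)"
  have t: "0 < t" "t \<le> 1" "t * (G + \<rho>) = G"
    using \<open>0 < G\<close> admissibleD(5)[OF adm] by (auto simp: t_def)
  have "Ffun U \<mu> 0 \<gamma> \<alpha> \<rho> \<le> Ffun U \<mu> 0 (\<lambda>p. \<gamma> p - t * g p) (\<lambda>p. (1 - t) * \<alpha> p) (\<rho> + t * G)"
  proof (rule minimizer_le_competitor[OF min \<open>0 \<le> T\<close>])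
    show "integrable torus (\<lambda>p. \<gamma> p - t * g p)"
      using admissibleD(1)[OF adm] g_int by simp
    show "(\<lambda>p. (1 - t) * \<alpha> p) \<in> borel_measurable torus"
      by measurable
    show "AE p in torus. 0 \<le> \<gamma> p - t * g p"
      using g_bounds by eventually_elim (use t in \<open>auto intro: order_trans[OF mult_left_le_one_le]\<close>)
    show "0 \<le> \<rho> + t * G"
      using admissibleD(5)[OF adm] t \<open>0 < G\<close> by simp
    show "AE p in torus. (1/2 + \<gamma> p)\<^sup>2 - (\<alpha> p)\<^sup>2 \<le> (1/2 + (\<gamma> p - t * g p))\<^sup>2 - ((1 - t) * \<alpha> p)\<^sup>2"
      using admissibleD(3)[OF adm] unfolding g_def transfer_density_def
      by eventually_elim (rule transfer_discriminant_le, use t in auto)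
  qed
  also have "\<dots> = Ffun U \<mu> 0 \<gamma> \<alpha> \<rho> - t * tint (\<lambda>p. disp p * g p) - U * G\<^sup>2 * ((t - 1)\<^sup>2 + 1/2)"
    unfolding G_def using admissibleD(1)[OF adm] g_int balanced t(3)[unfolded G_def]
    by (rule Ffun_zero_transfer)
  finally have "t * tint (\<lambda>p. disp p * g p) + U * G\<^sup>2 * ((t - 1)\<^sup>2 + 1/2) \<le> 0"
    by simp
  moreover have "0 \<le> t * tint (\<lambda>p. disp p * g p)"
    using t g_bounds disp_bounds by (intro mult_nonneg_nonneg tint_nonneg) auto
  moreover have "0 < U * G\<^sup>2 * ((t - 1)\<^sup>2 + 1/2)"
    using \<open>0 < U\<close> \<open>0 < G\<close> by (intro mult_pos_pos) (auto intro: add_nonneg_pos)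
  ultimately show False
    by linarith
qed

lemma pair_creation_discriminant_le:
  fixes g a e i :: real
  assumes "0 \<le> g" "i = 0 \<or> (i = 1 \<and> a = 0)"
  shows "(1/2 + g)\<^sup>2 - a\<^sup>2 \<le> (1/2 + (g + e\<^sup>2 * i))\<^sup>2 - (a - e * i)\<^sup>2"
proof -
  have "(1/2 + (g + e\<^sup>2))\<^sup>2 - e\<^sup>2 = (1/2 + g)\<^sup>2 + (2 * g + e\<^sup>2) * e\<^sup>2"
    by (simp add: power2_eq_square algebra_simps)
  then show ?thesis
    using assms by auto
qed

lemma Ffun_zero_pair_creation_le:
  assumes "integrable torus \<gamma>" "integrable torus \<alpha>" "E \<in> sets torus"
    and "0 \<le> tint \<gamma>" "0 < U" "0 \<le> e" "e \<le> 1"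
  defines "m \<equiv> measure torus E"
  shows "Ffun U \<mu> 0 (\<lambda>p. \<gamma> p + e\<^sup>2 * indicator E p) (\<lambda>p. \<alpha> p - e * indicator E p) \<rho>
    \<le> Ffun U \<mu> 0 \<gamma> \<alpha> \<rho>
      + e * m * (e * (12 + \<bar>\<mu>\<bar> + U/2 + 2 * U * tint \<gamma> + U + 2 * U * \<rho>) - U * (tint \<alpha> + \<rho>))"
proof -
  define ind :: "real^3 \<Rightarrow> real" where "ind = indicator E"
  have ind_int: "integrable torus ind"
    unfolding ind_def
    by (rule integrable_real_indicator[OF assms(3)]) (simp add: less_top[symmetric])
  have "0 \<le> m" "m \<le> 1"
    unfolding m_def by simp_all
  have "tint ind = m"
    by (simp add: ind_def m_def tint_def)
  define Y where "Y = tint (\<lambda>p. disp p * ind p)"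
  have "Y \<le> 12 * m"
    unfolding Y_def using ind_int \<open>tint ind = m\<close>
    by (auto simp: ind_def intro: order_trans[OF tint_disp_mult_le])
  from \<open>tint ind = m\<close> have tints: "tint (\<lambda>p. \<gamma> p + e\<^sup>2 * ind p) = tint \<gamma> + e\<^sup>2 * m"
    "tint (\<lambda>p. \<alpha> p - e * ind p) = tint \<alpha> - e * m"
    "tint (\<lambda>p. disp p * (\<gamma> p + e\<^sup>2 * ind p)) = tint (\<lambda>p. disp p * \<gamma> p) + e\<^sup>2 * Y"
    using assms(1,2) ind_int integrable_disp_mult[OF assms(1)] integrable_disp_mult[OF ind_int]
    by (simp_all add: Y_def tint_def distrib_left mult.left_commute[of "disp _"])
  have int: "integrable torus (\<lambda>p. \<gamma> p + e\<^sup>2 * ind p)"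
    using assms(1) ind_int by simp
  have "m\<^sup>2 \<le> m" "e\<^sup>2 * m \<le> 1"
    using \<open>0 \<le> m\<close> \<open>m \<le> 1\<close> assms(6,7)
    by (simp_all add: power2_eq_square mult_left_le_one_le mult_le_one)
  then have "0 \<le> e\<^sup>2 * (12 * m - Y)" "0 \<le> e\<^sup>2 * m * (\<bar>\<mu>\<bar> + \<mu>)"
    "0 \<le> U/2 * e\<^sup>2 * (m - m\<^sup>2)" "0 \<le> U * e\<^sup>2 * m * (1 - e\<^sup>2 * m)"
    using \<open>Y \<le> 12 * m\<close> \<open>0 \<le> m\<close> \<open>0 < U\<close> by simp_all
  moreover have "Ffun U \<mu> 0 \<gamma> \<alpha> \<rho>
      + e * m * (e * (12 + \<bar>\<mu>\<bar> + U/2 + 2 * U * tint \<gamma> + U + 2 * U * \<rho>) - U * (tint \<alpha> + \<rho>))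
      - Ffun U \<mu> 0 (\<lambda>p. \<gamma> p + e\<^sup>2 * ind p) (\<lambda>p. \<alpha> p - e * ind p) \<rho>
    = e\<^sup>2 * (12 * m - Y) + e\<^sup>2 * m * (\<bar>\<mu>\<bar> + \<mu>) + U/2 * e\<^sup>2 * (m - m\<^sup>2)
      + U * e\<^sup>2 * m * (1 - e\<^sup>2 * m)"
    unfolding Ffun_zero_temperature[OF assms(1)] Ffun_zero_temperature[OF int] tints
    by (simp add: field_simps power2_eq_square power4_eq_xxxx)
  ultimately show ?thesis
    unfolding ind_def by linarith
qed

lemma exists_pos_le_one_mult_less:
  fixes B K :: real
  assumes "0 < B" "0 < K"
  shows "\<exists>e. 0 < e \<and> e \<le> 1 \<and> e * K < B"
proof (intro exI conjI)
  show "0 < min 1 (B / (2 * K))" "min 1 (B / (2 * K)) \<le> 1"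
    using assms by simp_all
  have "min 1 (B / (2 * K)) * K \<le> B / 2"
    using assms(2) by (simp add: min_def field_simps)
  then show "min 1 (B / (2 * K)) * K < B"
    using assms(1) by linarith
qed

lemma minimizer_AE_alpha_neg:
  assumes min: "is_minimizer U \<mu> T \<gamma> \<alpha> \<rho>" and "0 \<le> T" "0 < U"
    and unbalanced: "0 < tint \<alpha> + \<rho>" and nonpos: "AE p in torus. \<alpha> p \<le> 0"
  shows "AE p in torus. \<alpha> p < 0"
proof (rule ccontr)
  assume not_neg: "\<not> (AE p in torus. \<alpha> p < 0)"
  have adm: "admissible \<gamma> \<alpha> \<rho>"
    using min by (rule minimizer_admissible)
  note adm_facts = admissibleD[OF adm]
  note [measurable] = adm_facts(2)
  define E where "E = {p. 0 \<le> \<alpha> p}"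
  have E_sets [measurable]: "E \<in> sets torus"
    unfolding E_def by measurable
  have "emeasure torus E \<noteq> 0"
    using not_neg AE_iff_measurable[OF E_sets, of "\<lambda>p. \<alpha> p < 0"] by (auto simp: E_def not_less)
  then have "0 < measure torus E"
    by (simp add: torus.emeasure_eq_measure zero_less_measure_iff)
  \<comment> \<open>K dominates the coefficient of e^2 m in the energy change\<close>
  define K where "K = 12 + \<bar>\<mu>\<bar> + U/2 + 2 * U * tint \<gamma> + U + 2 * U * \<rho>"
  have "0 \<le> tint \<gamma>"
    using adm_facts(3) by (rule tint_nonneg)
  then have "0 < K"
    unfolding K_def using \<open>0 < U\<close> adm_facts(5) by (simp add: add_pos_nonneg)
  then obtain e where e: "0 < e" "e \<le> 1" "e * K < U * (tint \<alpha> + \<rho>)"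
    using exists_pos_le_one_mult_less \<open>0 < U\<close> unbalanced by (metis mult_pos_pos)
  have "Ffun U \<mu> 0 \<gamma> \<alpha> \<rho>
      \<le> Ffun U \<mu> 0 (\<lambda>p. \<gamma> p + e\<^sup>2 * indicator E p) (\<lambda>p. \<alpha> p - e * indicator E p) \<rho>"
  proof (rule minimizer_le_competitor[OF min \<open>0 \<le> T\<close>])
    show "integrable torus (\<lambda>p. \<gamma> p + e\<^sup>2 * indicator E p)"
      using adm_facts(1) E_sets by (simp add: less_top[symmetric])
    show "(\<lambda>p. \<alpha> p - e * indicator E p) \<in> borel_measurable torus"
      by measurable
    show "AE p in torus. 0 \<le> \<gamma> p + e\<^sup>2 * indicator E p"
      using adm_facts(3) by eventually_elim simp
    show "AE p in torus. (1/2 + \<gamma> p)\<^sup>2 - (\<alpha> p)\<^sup>2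
        \<le> (1/2 + (\<gamma> p + e\<^sup>2 * indicator E p))\<^sup>2 - (\<alpha> p - e * indicator E p)\<^sup>2"
      using adm_facts(3) nonpos
      by eventually_elim (rule pair_creation_discriminant_le, auto simp: E_def indicator_def)
  qed (rule adm_facts(5))
  also have "\<dots> \<le> Ffun U \<mu> 0 \<gamma> \<alpha> \<rho> + e * measure torus E * (e * K - U * (tint \<alpha> + \<rho>))"
    unfolding K_def using adm_facts(1) integrable_alpha_if_admissible[OF adm] E_sets
      \<open>0 \<le> tint \<gamma>\<close> \<open>0 < U\<close> e(1,2)
    by (intro Ffun_zero_pair_creation_le) auto
  finally have "0 \<le> e * measure torus E * (e * K - U * (tint \<alpha> + \<rho>))"
    by simp
  moreover have "e * measure torus E * (e * K - U * (tint \<alpha> + \<rho>)) < 0"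
    using e \<open>0 < measure torus E\<close> by (simp add: mult_pos_neg)
  ultimately show False
    by simp
qed

lemma minimizer_dichotomy:
  assumes min: "is_minimizer U \<mu> T \<gamma> \<alpha> \<rho>" and "0 \<le> T" "0 < U"
  shows "(AE p in torus. \<alpha> p = 0) \<and> \<rho> = 0
    \<or> (AE p in torus. \<alpha> p < 0) \<and> tint (\<lambda>p. \<bar>\<alpha> p\<bar>) < \<rho>"
proof -
  have adm: "admissible \<gamma> \<alpha> \<rho>"
    using min by (rule minimizer_admissible)
  have int: "integrable torus \<alpha>"
    using adm by (rule integrable_alpha_if_admissible)
  have "0 \<le> tint (\<lambda>p. \<bar>\<alpha> p\<bar>)"
    by (rule tint_nonneg) simp
  moreover have "- tint (\<lambda>p. \<bar>\<alpha> p\<bar>) \<le> tint \<alpha>"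
    using int integral_mono[of torus "\<lambda>p. - \<bar>\<alpha> p\<bar>" \<alpha>] by (simp add: tint_def)
  ultimately have "tint \<alpha> + \<rho> = 0 \<or> (tint \<alpha> = - tint (\<lambda>p. \<bar>\<alpha> p\<bar>) \<and> tint (\<lambda>p. \<bar>\<alpha> p\<bar>) < \<rho>)"
    using admissibleD(5)[OF adm]
    by (intro sq_add_le_sq_diff_cases minimizer_condensate_sq_le[OF min \<open>0 \<le> T\<close> \<open>0 < U\<close>])
  then consider (balanced) "tint \<alpha> + \<rho> = 0"
    | (nonpos) "tint \<alpha> = - tint (\<lambda>p. \<bar>\<alpha> p\<bar>)" "tint (\<lambda>p. \<bar>\<alpha> p\<bar>) < \<rho>"
    by blast
  then show ?thesis
  proof cases
    case balanced
    then have "AE p in torus. \<alpha> p = 0"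
      by (rule minimizer_AE_alpha_eq_0[OF min \<open>0 \<le> T\<close> \<open>0 < U\<close>])
    moreover from this have "tint \<alpha> = 0"
      unfolding tint_def by (rule integral_eq_zero_AE)
    ultimately show ?thesis
      using balanced by simp
  next
    case nonpos
    have "AE p in torus. \<alpha> p \<le> 0"
      using int nonpos(1) by (intro AE_nonpos_if_integral_eq_neg_integral_abs) (simp_all add: tint_def)
    moreover have "0 < tint \<alpha> + \<rho>"
      using nonpos by simp
    ultimately have "AE p in torus. \<alpha> p < 0"
      by (intro minimizer_AE_alpha_neg[OF min \<open>0 \<le> T\<close> \<open>0 < U\<close>])
    with nonpos show ?thesis
      by simp
  qed
qed

theorem proposition4p1:
  fixes U \<mu> T \<rho>0 :: real and \<gamma> \<alpha> :: "real^3 \<Rightarrow> real"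
  assumes "U > 0" and "T \<ge> 0"
    and "is_minimizer U \<mu> T \<gamma> \<alpha> \<rho>0"
  shows "((AE p in torus. \<alpha> p = 0) \<longleftrightarrow> \<rho>0 = 0)
    \<and> (\<rho>0 > 0 \<longrightarrow> (AE p in torus. \<alpha> p < 0) \<and> tint (\<lambda>p. \<bar>\<alpha> p\<bar>) < \<rho>0)"
  using minimizer_dichotomy[OF assms(3,2,1)]
proof
  assume "(AE p in torus. \<alpha> p = 0) \<and> \<rho>0 = 0"
  then show ?thesis
    by simp
next
  assume neg: "(AE p in torus. \<alpha> p < 0) \<and> tint (\<lambda>p. \<bar>\<alpha> p\<bar>) < \<rho>0"
  then have "0 < \<rho>0"
    using tint_nonneg[of "\<lambda>p. \<bar>\<alpha> p\<bar>"] by simp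
  moreover have "\<not> (AE p in torus. \<alpha> p = 0)"
  proof
    assume "AE p in torus. \<alpha> p = 0"
    with conjunct1[OF neg] have "AE p in torus. False"
      by eventually_elim simp
    then show False
      by simp
  qed
  ultimately show ?thesis
    using neg by simp
qed

end
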